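(* Let $A$ and $B$ be C$^*$-algebras, where $A$ is unital with unit $1$. Suppose $T:A\to B$ is a linear map such that for all $a,b\in A$, $ab^*=1$ implies $T(a)T(b)^*=T(1)$. Then $T$ is continuous and $T(1)T(a)=T(a)$ for every $a\in A$. Furthermore, if $T$ is a $^*$-homomorphism at the unit of $A$, then $T$ is continuous and $T(a)T(1)=T(1)T(a)=T(a)$ for every $a\in A$.
   Context: A map $T:A\to B$ between C$^*$-algebras is a $^*$-homomorphism at $z\in A$ if for all $a,b\in A$ with $ab^*=z$ one has $T(ab^* )=T(a)T(b)^*=T(z)$, and for all $c,d\in A$ with $c^*d=z$ one has $T(c^*d)=T(c)^*T(d)=T(z)$. *)

theory Defs
  imports "HOL-Analysis.Analysis"
begin

class scaleC =
  fixes scaleC :: "complex \<Rightarrow> 'a \<Rightarrow> 'a" (infixr \<open>*\<^sub>C\<close> 75)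

class complex_vector = scaleC + real_vector +
  assumes scaleC_add_right: "a *\<^sub>C (x + y) = a *\<^sub>C x + a *\<^sub>C y"
    and scaleC_add_left: "(a + b) *\<^sub>C x = a *\<^sub>C x + b *\<^sub>C x"
    and scaleC_scaleC: "a *\<^sub>C (b *\<^sub>C x) = (a * b) *\<^sub>C x"
    and scaleC_one: "1 *\<^sub>C x = x"
    and scaleR_scaleC: "scaleR r x = (complex_of_real r) *\<^sub>C x"

class complex_normed_vector = complex_vector + real_normed_vector +
  assumes norm_scaleC: "norm (a *\<^sub>C x) = cmod a * norm x"

class complex_algebra = complex_vector + ring +
  assumes mult_scaleC_left: "(a *\<^sub>C x) * y = a *\<^sub>C (x * y)"
    and mult_scaleC_right: "x * (a *\<^sub>C y) = a *\<^sub>C (x * y)"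

class complex_normed_algebra = complex_normed_vector + complex_algebra + real_normed_algebra

class cstar_algebra = complex_normed_algebra + complete_space +
  fixes adj :: "'a \<Rightarrow> 'a"
  assumes adj_add: "adj (x + y) = adj x + adj y"
    and adj_scaleC: "adj (a *\<^sub>C x) = cnj a *\<^sub>C adj x"
    and adj_mult: "adj (x * y) = adj y * adj x"
    and adj_adj: "adj (adj x) = x"
    and cstar_identity: "norm (adj x * x) = norm x * norm x"

definition clinear :: "('a::complex_vector \<Rightarrow> 'b::complex_vector) \<Rightarrow> bool" where
  "clinear T \<longleftrightarrow> (\<forall>x y. T (x + y) = T x + T y) \<and> (\<forall>c x. T (c *\<^sub>C x) = c *\<^sub>C T x)"

definition star_hom_at :: "('a::cstar_algebra \<Rightarrow> 'b::cstar_algebra) \<Rightarrow> 'a \<Rightarrow> bool" where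
  "star_hom_at T z \<longleftrightarrow>
     (\<forall>a b. a * adj b = z \<longrightarrow> T (a * adj b) = T a * adj (T b) \<and> T a * adj (T b) = T z) \<and>
     (\<forall>c d. adj c * d = z \<longrightarrow> T (adj c * d) = adj (T c) * T d \<and> adj (T c) * T d = T z)"

end

theory Submission
  imports Defs
begin

text \<open>
  Every element of a unital C*-algebra is a combination \<open>a = r(u + u*) + i t(v + v*)\<close> of
  unitaries \<open>u, v\<close> with \<open>0 \<le> r, t \<le> \<parallel>a\<parallel>\<close>: for self-adjoint \<open>x\<close> with \<open>\<parallel>x\<parallel> \<le> 1/2\<close> the element
  \<open>x + i\<surd>(1 - x\<^sup>2)\<close> is unitary, and the square root is obtained as \<open>1 - z\<close> for the fixed point
  \<open>z\<close> of the contraction \<open>z \<mapsto> (x\<^sup>2 + z\<^sup>2)/2\<close>, so no functional calculus is needed.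

  Applying the hypothesis to \<open>a = b = 1\<close> makes \<open>p = T 1\<close> a projection, and for a unitary \<open>w\<close>
  it gives \<open>T w (T w)* = p\<close>. In a C*-algebra this forces \<open>\<parallel>T w\<parallel> \<le> 1\<close> and \<open>p T w = T w\<close>; by
  linearity and the decomposition both extend to all of \<open>A\<close>, giving continuity and \<open>p T a = T a\<close>.
  If \<open>T\<close> is a *-homomorphism at \<open>1\<close>, also \<open>(T w)* T w = p\<close>, and the same argument applied to
  \<open>(T w)*\<close> yields \<open>T w p = T w\<close>.
\<close>

lemma scaleC_of_real: "complex_of_real r *\<^sub>C (x::'a::complex_vector) = r *\<^sub>R x"
  by (simp add: scaleR_scaleC)

lemma scaleC_zero_left [simp]: "0 *\<^sub>C (x::'a::complex_vector) = 0"
  by (metis scaleC_of_real of_real_0 scale_zero_left)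

lemma scaleC_zero_right [simp]: "c *\<^sub>C (0::'a::complex_vector) = 0"
  by (metis add_cancel_right_right scaleC_add_right)

lemma scaleC_minus_left: "(- c) *\<^sub>C (x::'a::complex_vector) = - (c *\<^sub>C x)"
  by (metis add_eq_0_iff add.right_inverse scaleC_add_left scaleC_zero_left)

lemma scaleC_minus_right: "c *\<^sub>C (- x::'a::complex_vector) = - (c *\<^sub>C x)"
  by (metis add.right_inverse add_eq_0_iff scaleC_add_right scaleC_zero_right)

lemma scaleC_diff_right: "c *\<^sub>C (x - y::'a::complex_vector) = c *\<^sub>C x - c *\<^sub>C y"
  by (simp only: diff_conv_add_uminus scaleC_add_right scaleC_minus_right)

lemma clinear_scaleR:
  assumes "clinear T"
  shows "T (r *\<^sub>R x) = r *\<^sub>R T x"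
  using assms by (simp add: clinear_def flip: scaleC_of_real)

lemma clinear_mult_left:
  assumes "clinear T"
  shows "clinear (\<lambda>x. p * T x :: 'b::complex_algebra)"
  using assms by (simp add: clinear_def distrib_left mult_scaleC_right)

lemma clinear_mult_right:
  assumes "clinear T"
  shows "clinear (\<lambda>x. T x * p :: 'b::complex_algebra)"
  using assms by (simp add: clinear_def distrib_right mult_scaleC_left)

lemma adj_zero [simp]: "adj (0::'a::cstar_algebra) = 0"
  by (metis add_cancel_right_right adj_add)

lemma adj_minus: "adj (- x) = - adj (x::'a::cstar_algebra)"
  by (metis add.right_inverse adj_add adj_zero add_eq_0_iff)

lemma adj_diff: "adj (x - y) = adj x - adj (y::'a::cstar_algebra)"
  by (simp only: diff_conv_add_uminus adj_add adj_minus)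

lemma adj_scaleR: "adj (r *\<^sub>R x) = r *\<^sub>R adj (x::'a::cstar_algebra)"
  by (metis adj_scaleC complex_cnj_complex_of_real scaleC_of_real)

lemma adj_one [simp]: "adj (1::'a::{cstar_algebra,ring_1}) = 1"
  by (metis adj_adj adj_mult mult_1_left mult_1_right)

lemma norm_adj_le: "norm (adj x) \<le> norm (x::'a::cstar_algebra)"
proof -
  have "norm (adj x) * norm (adj x) = norm (adj (adj x) * adj x)"
    by (simp add: cstar_identity)
  also have "\<dots> \<le> norm x * norm (adj x)"
    by (simp add: adj_adj norm_mult_ineq)
  finally show ?thesis
    by (cases "adj x = 0") (simp_all add: mult_le_cancel_right less_le)
qed

lemma norm_adj [simp]: "norm (adj x) = norm (x::'a::cstar_algebra)"
  by (metis adj_adj antisym norm_adj_le)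

lemma mult_adj_self_eq_zero_iff: "x * adj x = 0 \<longleftrightarrow> x = (0::'a::cstar_algebra)"
  by (metis adj_adj cstar_identity norm_adj norm_eq_zero mult_eq_0_iff mult_zero_left)

lemma bounded_linear_adj: "bounded_linear (adj :: 'a::cstar_algebra \<Rightarrow> 'a)"
  by (rule bounded_linear_intro[where K=1]) (auto simp: adj_add adj_scaleR)

lemma norm_projection_le_one:
  fixes p :: "'a::cstar_algebra"
  assumes "adj p = p" "p * p = p"
  shows "norm p \<le> 1"
proof -
  have "norm p * norm p = norm p"
    using cstar_identity[of p] assms by simp
  then show ?thesis
    by (metis mult_cancel_right2 mult_zero_left order.eq_iff zero_le_one)
qed

lemma projection_mult_eq_if_mult_adj_eq:
  fixes p q :: "'a::cstar_algebra"
  assumes p: "adj p = p" "p * p = p" and q: "q * adj q = p"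
  shows "p * q = q"
proof -
  have "(q - p * q) * adj (q - p * q) = q * adj q - (q * adj q) * p - p * (q * adj q) + p * (q * adj q) * p"
    by (simp add: adj_diff adj_mult p algebra_simps)
  also have "\<dots> = 0"
    using p q by (simp add: mult.assoc)
  finally show ?thesis
    by (simp add: mult_adj_self_eq_zero_iff)
qed

lemma norm_le_one_if_mult_adj_eq_projection:
  fixes p q :: "'a::cstar_algebra"
  assumes p: "adj p = p" "p * p = p" and q: "q * adj q = p"
  shows "norm q \<le> 1"
proof -
  have "(norm q)\<^sup>2 = norm p"
    using cstar_identity[of "adj q"] q by (simp add: adj_adj power2_eq_square)
  with norm_projection_le_one[OF p] have "(norm q)\<^sup>2 \<le> 1\<^sup>2"
    by simp
  then show ?thesis
    by (rule power2_le_imp_le) simp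
qed

lemma norm_diff_squares_le:
  fixes z w :: "'a::real_normed_algebra"
  shows "norm (z * z - w * w) \<le> (norm z + norm w) * norm (z - w)"
proof -
  have eq: "z * z - w * w = z * (z - w) + (z - w) * w"
    by (simp add: algebra_simps)
  have "norm (z * z - w * w) \<le> norm z * norm (z - w) + norm (z - w) * norm w"
    unfolding eq by (intro norm_triangle_le add_mono norm_mult_ineq)
  then show ?thesis
    by (simp add: algebra_simps)
qed

text \<open>The fixed point is \<open>z = 1 - \<surd>(1 - x\<^sup>2)\<close>; it is found in the closed set of small
  self-adjoint elements commuting with \<open>x\<close>, on which \<open>z \<mapsto> (x\<^sup>2 + z\<^sup>2)/2\<close> is a \<open>1/2\<close>-contraction.\<close>
lemma exists_fixpoint_half_sum_squares:
  fixes x :: "'a::{cstar_algebra,ring_1}"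
  assumes sa: "adj x = x" and nx: "norm x \<le> 1/2"
  shows "\<exists>z. adj z = z \<and> z * x = x * z \<and> z + z = x * x + z * z"
proof -
  define S where "S = {z::'a. norm z \<le> 1/2 \<and> adj z = z \<and> z * x = x * z}"
  define f where "f z = (1/2::real) *\<^sub>R (x * x + z * z)" for z
  have "closed S"
    unfolding S_def using bounded_linear_adj
    by (intro closed_Collect_conj closed_Collect_le closed_Collect_eq continuous_intros
        linear_continuous_on)
  then have "complete S"
    by (simp add: complete_eq_closed)
  moreover have "0 \<in> S"
    by (simp add: S_def)
  moreover have "f z \<in> S" if "z \<in> S" for z
  proof -
    have z: "norm z \<le> 1/2" "adj z = z" "z * x = x * z"
      using that by (auto simp: S_def)
    have "norm (x * x + z * z) \<le> norm x * norm x + norm z * norm z"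
      by (intro norm_triangle_le add_mono norm_mult_ineq)
    also have "\<dots> \<le> 1/2 * (1/2) + 1/2 * (1/2)"
      using z nx by (intro add_mono mult_mono) auto
    finally have "norm (f z) \<le> 1/2"
      by (simp add: f_def)
    moreover have "adj (f z) = f z"
      using z sa by (simp add: f_def adj_scaleR adj_add adj_mult)
    moreover have "z * (z * x) = x * (z * z)"
      using z(3) by (simp flip: mult.assoc)
    then have "f z * x = x * f z"
      by (simp add: f_def distrib_left distrib_right mult.assoc)
    ultimately show ?thesis
      by (simp add: S_def)
  qed
  moreover have "dist (f z) (f w) \<le> 1/2 * dist z w" if "z \<in> S" "w \<in> S" for z w
  proof -
    have "dist (f z) (f w) = 1/2 * norm (z * z - w * w)"
      by (simp add: f_def dist_norm flip: scaleR_diff_right)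
    also have "\<dots> \<le> 1/2 * ((norm z + norm w) * norm (z - w))"
      using norm_diff_squares_le by simp
    also have "\<dots> \<le> 1/2 * dist z w"
      using that by (auto simp: S_def dist_norm intro!: mult_left_le_one_le)
    finally show ?thesis .
  qed
  ultimately obtain z where "z \<in> S" "f z = z"
    using Banach_fix[of S "1/2" f] by auto
  moreover have "z + z = (2::real) *\<^sub>R f z"
    using \<open>f z = z\<close> by (simp add: scaleR_2)
  then have "z + z = x * x + z * z"
    by (simp add: f_def)
  ultimately show ?thesis
    by (auto simp: S_def)
qed

definition unitary :: "'a::{cstar_algebra,ring_1} \<Rightarrow> bool" where
  "unitary u \<longleftrightarrow> u * adj u = 1 \<and> adj u * u = 1"

lemma unitary_one: "unitary 1"
  by (simp add: unitary_def)

lemma unitary_adj: "unitary u \<Longrightarrow> unitary (adj u)"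
  by (simp add: unitary_def adj_adj)

lemma unitary_add_i_scaleC:
  fixes x s :: "'a::{cstar_algebra,ring_1}"
  assumes "adj x = x" "adj s = s" "s * x = x * s" "x * x + s * s = 1"
  shows "unitary (x + \<i> *\<^sub>C s)"
proof -
  have "(x + c *\<^sub>C s) * (x + d *\<^sub>C s) = 1" if "c * d = 1" "c + d = 0" for c d
  proof -
    have "(x + c *\<^sub>C s) * (x + d *\<^sub>C s) = x * x + (c + d) *\<^sub>C (x * s) + (c * d) *\<^sub>C (s * s)"
      using assms(3)
      by (simp add: algebra_simps mult_scaleC_left mult_scaleC_right scaleC_scaleC scaleC_add_left scaleC_add_right)
    then show ?thesis
      using that assms(4) by (simp add: scaleC_one)
  qed
  moreover have "adj (x + \<i> *\<^sub>C s) = x + (- \<i>) *\<^sub>C s"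
    by (simp add: adj_add adj_scaleC assms(1,2))
  ultimately show ?thesis
    by (simp add: unitary_def)
qed

lemma selfadjoint_eq_scaleR_unitary_add_adj:
  fixes x :: "'a::{cstar_algebra,ring_1}"
  assumes sa: "adj x = x"
  shows "\<exists>u. unitary u \<and> x = norm x *\<^sub>R (u + adj u)"
proof (cases "x = 0")
  case True
  then show ?thesis
    using unitary_one by auto
next
  case False
  define y where "y = (1 / (2 * norm x)) *\<^sub>R x"
  have y: "adj y = y" "norm y \<le> 1/2"
    using sa False by (simp_all add: y_def adj_scaleR)
  then obtain z where z: "adj z = z" "z * y = y * z" "z + z = y * y + z * z"
    using exists_fixpoint_half_sum_squares by blast
  define s where "s = 1 - z"
  have s: "adj s = s" "s * y = y * s" "y * y + s * s = 1"
    using z by (simp_all add: s_def adj_diff algebra_simps)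
  define u where "u = y + \<i> *\<^sub>C s"
  have "unitary u"
    unfolding u_def using y(1) s by (rule unitary_add_i_scaleC)
  moreover have "u + adj u = y + y"
    by (simp add: u_def adj_add adj_scaleC y s flip: scaleC_add_left)
  then have "x = norm x *\<^sub>R (u + adj u)"
    using False by (simp add: y_def flip: scaleR_add_left)
  ultimately show ?thesis
    by blast
qed

lemma unitary_decomposition:
  fixes a :: "'a::{cstar_algebra,ring_1}"
  obtains u v r t where "unitary u" "unitary v" "0 \<le> r" "r \<le> norm a" "0 \<le> t" "t \<le> norm a"
    "a = r *\<^sub>R (u + adj u) + \<i> *\<^sub>C (t *\<^sub>R (v + adj v))"
proof -
  define h where "h = (1/2::real) *\<^sub>R (a + adj a)"
  define k where "k = (- \<i> / 2) *\<^sub>C (a - adj a)"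
  have "adj h = h"
    by (simp add: h_def adj_scaleR adj_add adj_adj add.commute)
  then obtain u where u: "unitary u" "h = norm h *\<^sub>R (u + adj u)"
    using selfadjoint_eq_scaleR_unitary_add_adj by blast
  have "adj k = (\<i> / 2) *\<^sub>C (adj a - a)"
    by (simp add: k_def adj_scaleC adj_diff adj_adj)
  also have "\<dots> = k"
    by (metis k_def minus_diff_eq scaleC_minus_left scaleC_minus_right minus_divide_left)
  finally obtain v where v: "unitary v" "k = norm k *\<^sub>R (v + adj v)"
    using selfadjoint_eq_scaleR_unitary_add_adj by blast
  have "norm h \<le> norm a"
    using norm_triangle_ineq[of a "adj a"] by (simp add: h_def)
  moreover have "norm k \<le> norm a"
    using norm_triangle_ineq4[of a "adj a"] by (simp add: k_def norm_scaleC norm_divide)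
  moreover have "\<i> *\<^sub>C k = (1/2::real) *\<^sub>R (a - adj a)"
    by (simp add: k_def scaleC_scaleC scaleR_scaleC)
  then have "a = h + \<i> *\<^sub>C k"
    by (simp add: h_def flip: scaleR_add_right scaleR_diff_right)
  ultimately show ?thesis
    using u v that[of u v "norm h" "norm k"] by simp
qed

lemma clinear_unitary_decomposition:
  fixes T :: "'a::{cstar_algebra,ring_1} \<Rightarrow> 'b::complex_vector"
  assumes "clinear T"
  obtains u v r t where "unitary u" "unitary v" "0 \<le> r" "r \<le> norm a" "0 \<le> t" "t \<le> norm a"
    "T a = r *\<^sub>R (T u + T (adj u)) + \<i> *\<^sub>C (t *\<^sub>R (T v + T (adj v)))"
proof -
  obtain u v r t where "unitary u" "unitary v" "0 \<le> r" "r \<le> norm a" "0 \<le> t" "t \<le> norm a"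
    and a: "a = r *\<^sub>R (u + adj u) + \<i> *\<^sub>C (t *\<^sub>R (v + adj v))"
    by (rule unitary_decomposition)
  moreover have "T a = r *\<^sub>R (T u + T (adj u)) + \<i> *\<^sub>C (t *\<^sub>R (T v + T (adj v)))"
    unfolding a using assms by (simp add: clinear_def clinear_scaleR[OF assms])
  ultimately show ?thesis
    using that by blast
qed

lemma clinear_eq_if_eq_on_unitaries:
  fixes f g :: "'a::{cstar_algebra,ring_1} \<Rightarrow> 'b::complex_vector"
  assumes f: "clinear f" and g: "clinear g" and eq: "\<And>u. unitary u \<Longrightarrow> f u = g u"
  shows "f a = g a"
proof -
  have "clinear (\<lambda>x. f x - g x)"
    using f g by (simp add: clinear_def scaleC_diff_right)
  then obtain u v r t where "unitary u" "unitary v"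
    and "f a - g a = r *\<^sub>R (f u - g u + (f (adj u) - g (adj u))) +
      \<i> *\<^sub>C (t *\<^sub>R (f v - g v + (f (adj v) - g (adj v))))"
    by (rule clinear_unitary_decomposition)
  then show ?thesis
    by (simp add: eq unitary_adj)
qed

lemma bounded_linear_if_bounded_on_unitaries:
  fixes T :: "'a::{cstar_algebra,ring_1} \<Rightarrow> 'b::complex_normed_vector"
  assumes lin: "clinear T" and bound: "\<And>u. unitary u \<Longrightarrow> norm (T u) \<le> C"
  shows "bounded_linear T"
proof (rule bounded_linear_intro[where K = "4 * C"])
  fix a
  obtain u v r t where uv: "unitary u" "unitary v" and rt: "0 \<le> r" "r \<le> norm a" "0 \<le> t" "t \<le> norm a"
    and Ta: "T a = r *\<^sub>R (T u + T (adj u)) + \<i> *\<^sub>C (t *\<^sub>R (T v + T (adj v)))"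
    using lin by (rule clinear_unitary_decomposition)
  have pair: "norm (T w + T (adj w)) \<le> 2 * C" if "unitary w" for w
    using norm_triangle_ineq[of "T w" "T (adj w)"] bound[OF that] bound[OF unitary_adj[OF that]]
    by simp
  have "norm (T a) \<le> norm (r *\<^sub>R (T u + T (adj u))) + norm (\<i> *\<^sub>C (t *\<^sub>R (T v + T (adj v))))"
    unfolding Ta by (rule norm_triangle_ineq)
  also have "\<dots> = r * norm (T u + T (adj u)) + t * norm (T v + T (adj v))"
    using rt by (simp add: norm_scaleC)
  also have "\<dots> \<le> norm a * (2 * C) + norm a * (2 * C)"
    using rt pair[OF uv(1)] pair[OF uv(2)] by (intro add_mono mult_mono) auto
  finally show "norm (T a) \<le> norm a * (4 * C)"
    by (simp add: algebra_simps)
qed (use lin in \<open>simp_all add: clinear_def clinear_scaleR\<close>)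

theorem proposition2p4:
  fixes T :: "'a::{cstar_algebra, ring_1} \<Rightarrow> 'b::cstar_algebra"
  assumes lin: "clinear T"
    and unit_pres: "\<forall>a b. a * adj b = 1 \<longrightarrow> T a * adj (T b) = T 1"
  shows "continuous_on UNIV T \<and> (\<forall>a. T 1 * T a = T a) \<and>
         (star_hom_at T 1 \<longrightarrow>
            continuous_on UNIV T \<and> (\<forall>a. T a * T 1 = T a \<and> T 1 * T a = T a))"
proof -
  define p where "p = T 1"
  have "p * adj p = p"
    using unit_pres by (simp add: p_def)
  then have p: "adj p = p" "p * p = p"
    by (metis adj_adj adj_mult, metis adj_adj adj_mult)
  have range: "T u * adj (T u) = p" if "unitary u" for u
    using unit_pres that by (simp add: unitary_def p_def)
  have "bounded_linear T"
    using lin norm_le_one_if_mult_adj_eq_projection[OF p range]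
    by (rule bounded_linear_if_bounded_on_unitaries)
  then have cont: "continuous_on UNIV T"
    by (rule linear_continuous_on)
  have left: "p * T a = T a" for a
    using projection_mult_eq_if_mult_adj_eq[OF p range]
    by (rule clinear_eq_if_eq_on_unitaries[OF clinear_mult_left[OF lin] lin])
  have right: "T a * p = T a" if "star_hom_at T 1" for a
  proof -
    have "adj (T u) * adj (adj (T u)) = p" if "unitary u" for u
      using \<open>star_hom_at T 1\<close> \<open>unitary u\<close> by (simp add: star_hom_at_def unitary_def adj_adj p_def)
    then have "T u * p = T u" if "unitary u" for u
      using projection_mult_eq_if_mult_adj_eq[OF p] that by (metis adj_adj adj_mult p(1))
    then show ?thesis
      by (rule clinear_eq_if_eq_on_unitaries[OF clinear_mult_right[OF lin] lin])
  qed
  show ?thesis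
    using cont left right by (simp add: p_def)
qed

end
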